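(* Let $W,V$ be subspaces of $\mathbb{C}^n$ with $\mathbb{C}^n=W\oplus V^\perp$, let $\{\mathbf{w}_i\}_{i=1}^N$ be a frame for $W$ with frame operator $\mathbf{S}=\sum_{i=1}^N\mathbf{w}_i\mathbf{w}_i^*$, and let $\{\mathbf{v}_i\}_{i=1}^N$ be an oblique dual frame of $\{\mathbf{w}_i\}_{i=1}^N$ on $V$ such that $\langle\mathbf{w}_i,\mathbf{v}_i\rangle=\langle\mathbf{w}_j,\mathbf{v}_j\rangle$ for all $i,j$. Let $d_W=\dim W$. Then $$\max_{i\ne j}|\langle\mathbf{w}_i,\mathbf{v}_j\rangle|^2\ge\frac{d_W(N-d_W)}{N^2(N-1)}.$$ Furthermore, equality holds if and only if any of the following equivalent conditions holds: (1) $|\langle\mathbf{w}_i,\mathbf{v}_j\rangle|$ is constant over all $i\ne j$, and $\mathbf{v}_j=\boldsymbol{\pi}_{VW^\perp}\mathbf{S}^\dagger\mathbf{w}_j$ for each $j$; (2) the mixed Gram matrix $\mathbf{G}=(\langle\mathbf{w}_i,\mathbf{v}_j\rangle)_{ij}$ equals $\frac{d_W}{N}\left(\mathbf{Id}_{N\times N}+\sqrt{\frac{N-d_W}{d_W(N-1)}}\,\mathbf{Q}\right)$ for some generalized signature matrix $\mathbf{Q}$; (3) the vectors $\boldsymbol{\psi}_i:=\sqrt{N/d_W}\,(\mathbf{S}^\dagger)^{1/2}\mathbf{w}_i$, $i=1,\dots,N$, form an $(N,d_W)$-equiangular tight frame for $W$, and $\mathbf{v}_j=\boldsymbol{\pi}_{VW^\perp}\mathbf{S}^\dagger\mathbf{w}_j$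 for each $j$.
   Context: The inner product on $\mathbb{C}^n$ is $\langle\mathbf{x},\mathbf{y}\rangle=\mathbf{y}^*\mathbf{x}$. $\mathbf{S}^\dagger$ is the Moore–Penrose inverse and $(\mathbf{S}^\dagger)^{1/2}$ its positive semidefinite square root. When $\mathbb{C}^n=W\oplus V^\perp$ (equivalently $\mathbb{C}^n=V\oplus W^\perp$), $\boldsymbol{\pi}_{WV^\perp}$ is the oblique projection onto $W$ along $V^\perp$ and $\boldsymbol{\pi}_{VW^\perp}$ the oblique projection onto $V$ along $W^\perp$. A finite family in $W$ is a frame for $W$ if it spans $W$. A frame $\{\mathbf{v}_i\}_{i=1}^N\subset V$ for $V$ is an oblique dual frame of $\{\mathbf{w}_i\}$ on $V$ if $\boldsymbol{\pi}_{WV^\perp}\mathbf{f}=\sum_{i=1}^N\langle\mathbf{f},\mathbf{v}_i\rangle\mathbf{w}_i$ for all $\mathbf{f}\in\mathbb{C}^n$. A generalized signature matrix is a self-adjoint $N\times N$ matrix with zero diagonal and unimodular off-diagonal entries. A family of unit-norm vectors $\{\mathbf{f}_i\}_{i=1}^N$ in a $d$-dimensional space is an $(N,d)$-equiangular tight frame if it is a tight frame for that space and $|\langle\mathbf{f}_i,\mathbf{f}_j\rangle|^2$ is the same constant for all $i\ne j$. *)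

theory Defs
  imports "HOL-Analysis.Analysis"
begin

text \<open>Vectors of C^n are complex^'n (n = CARD('n)); complex linear algebra uses the
  interpretation vec (scalar multiplication by complex numbers).\<close>

definition cinner :: "complex^'n \<Rightarrow> complex^'n \<Rightarrow> complex" where
  "cinner x y = (\<Sum>k\<in>UNIV. x $ k * cnj (y $ k))"

definition orth_compl :: "(complex^'n) set \<Rightarrow> (complex^'n) set" where
  "orth_compl V = {x. \<forall>y\<in>V. cinner x y = 0}"

definition direct_sum_whole :: "(complex^'n) set \<Rightarrow> (complex^'n) set \<Rightarrow> bool" where
  "direct_sum_whole A B \<longleftrightarrow> vec.subspace A \<and> vec.subspace B \<and> A \<inter> B = {0}
     \<and> (\<forall>f. \<exists>a\<in>A. \<exists>b\<in>B. f = a + b)"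

text \<open>Oblique projection onto A along B (meaningful when C^n = A \<oplus> B).\<close>
definition obl_proj :: "(complex^'n) set \<Rightarrow> (complex^'n) set \<Rightarrow> complex^'n \<Rightarrow> complex^'n" where
  "obl_proj A B f = (THE a. a \<in> A \<and> f - a \<in> B)"

definition adj :: "complex^'n^'m \<Rightarrow> complex^'m^'n" where
  "adj A = (\<chi> i j. cnj (A $ j $ i))"

definition mp_inverse :: "complex^'n^'m \<Rightarrow> complex^'m^'n" where
  "mp_inverse A = (THE X. A ** X ** A = A \<and> X ** A ** X = X
                        \<and> adj (A ** X) = A ** X \<and> adj (X ** A) = X ** A)"

definition psd :: "complex^'n^'n \<Rightarrow> bool" where
  "psd R \<longleftrightarrow> adj R = R \<and> (\<forall>x. Re (cinner (R *v x) x) \<ge> 0)"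

definition psd_sqrt :: "complex^'n^'n \<Rightarrow> complex^'n^'n" where
  "psd_sqrt A = (THE R. psd R \<and> R ** R = A)"

definition is_frame :: "(complex^'n) set \<Rightarrow> ('m::finite \<Rightarrow> complex^'n) \<Rightarrow> bool" where
  "is_frame W w \<longleftrightarrow> (\<forall>i. w i \<in> W) \<and> vec.span (range w) = W"

definition frame_operator :: "('m::finite \<Rightarrow> complex^'n) \<Rightarrow> complex^'n^'n" where
  "frame_operator w = (\<chi> a b. \<Sum>i\<in>UNIV. w i $ a * cnj (w i $ b))"

definition oblique_dual_frame ::
  "(complex^'n) set \<Rightarrow> (complex^'n) set \<Rightarrow> ('m::finite \<Rightarrow> complex^'n) \<Rightarrow> ('m \<Rightarrow> complex^'n) \<Rightarrow> bool" where
  "oblique_dual_frame W V w v \<longleftrightarrow> is_frame V v \<and>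
     (\<forall>f. obl_proj W (orth_compl V) f = (\<Sum>i\<in>UNIV. cinner f (v i) *s w i))"

definition gen_signature :: "complex^'m^'m \<Rightarrow> bool" where
  "gen_signature Q \<longleftrightarrow> adj Q = Q \<and> (\<forall>i. Q $ i $ i = 0) \<and> (\<forall>i j. i \<noteq> j \<longrightarrow> cmod (Q $ i $ j) = 1)"

definition tight_frame :: "(complex^'n) set \<Rightarrow> ('m::finite \<Rightarrow> complex^'n) \<Rightarrow> bool" where
  "tight_frame W f \<longleftrightarrow> is_frame W f \<and>
     (\<exists>A>0. \<forall>x\<in>W. (\<Sum>i\<in>UNIV. (cmod (cinner x (f i)))\<^sup>2) = A * (norm x)\<^sup>2)"

definition is_ETF :: "nat \<Rightarrow> nat \<Rightarrow> (complex^'n) set \<Rightarrow> ('m::finite \<Rightarrow> complex^'n) \<Rightarrow> bool" where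
  "is_ETF N d W f \<longleftrightarrow> N = CARD('m) \<and> vec.dim W = d \<and> (\<forall>i. norm (f i) = 1) \<and> tight_frame W f \<and>
     (\<exists>c. \<forall>i j. i \<noteq> j \<longrightarrow> (cmod (cinner (f i) (f j)))\<^sup>2 = c)"

end

theory Submission
  imports Defs
begin

text \<open>Let G be the mixed Gram matrix of w and v, and H the one of w and its canonical dual
  S^+ w. The reconstruction formula gives G H = H and H G = G, and H is Hermitian: G and H are
  projections of C^N with the same range, of dimension dim W, and H is the orthogonal one.
  Hence the squared Frobenius norm of G is that of G - H plus dim W, so it is at least dim W,
  with equality iff G = H, i.e. iff v is the canonical oblique dual.
  Since the diagonal of G is constant and its trace is dim W, it equals dim W / N; the remaining
  mass, at least dim W - (dim W)^2 / N, is shared by the N (N - 1) off-diagonal entries, and the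
  largest of them is at least the average: this is the bound. Equality forces G = H and all
  off-diagonal moduli to be equal. A Hermitian matrix with constant diagonal and equimodular
  off-diagonal part is exactly one of the form c (Id + a Q) with Q a signature matrix, giving (2);
  and the vectors sqrt (N / dim W) (S^+)^(1/2) w always form a tight frame for W with Gram matrix
  (N / dim W) H, giving (3).\<close>

lemma cinner_add_left: "cinner (x + y) z = cinner x z + cinner y z"
  by (simp add: cinner_def distrib_right sum.distrib)

lemma cinner_add_right: "cinner x (y + z) = cinner x y + cinner x z"
  by (simp add: cinner_def distrib_left sum.distrib)

lemma cinner_diff_left: "cinner (x - y) z = cinner x z - cinner y z"
  by (simp add: cinner_def left_diff_distrib sum_subtractf)

lemma cinner_diff_right: "cinner x (y - z) = cinner x y - cinner x z"
  by (simp add: cinner_def right_diff_distrib sum_subtractf)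

lemma cinner_scale_left: "cinner (c *s x) y = c * cinner x y"
  by (simp add: cinner_def sum_distrib_left mult.assoc)

lemma cinner_scale_right: "cinner x (c *s y) = cnj c * cinner x y"
  by (simp add: cinner_def sum_distrib_left algebra_simps)

lemma cinner_neg_left: "cinner (- x) y = - cinner x y"
  by (simp add: cinner_def sum_negf)

lemma cinner_zero_left [simp]: "cinner 0 y = 0"
  by (simp add: cinner_def)

lemma cinner_zero_right [simp]: "cinner x 0 = 0"
  by (simp add: cinner_def)

lemma cinner_sum_left: "cinner (sum f A) y = (\<Sum>a\<in>A. cinner (f a) y)"
  by (induction A rule: infinite_finite_induct) (auto simp: cinner_add_left)

lemma cinner_sum_right: "cinner x (sum f A) = (\<Sum>a\<in>A. cinner x (f a))"
  by (induction A rule: infinite_finite_induct) (auto simp: cinner_add_right)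

lemma cinner_commute: "cinner y x = cnj (cinner x y)"
  by (simp add: cinner_def mult.commute)

lemma cinner_self: "cinner x x = of_real ((norm x)\<^sup>2)"
proof -
  have "(norm x)\<^sup>2 = (\<Sum>i\<in>UNIV. (cmod (x$i))\<^sup>2)"
    by (simp add: norm_vec_def L2_set_def sum_nonneg)
  then show ?thesis
    by (simp add: cinner_def complex_norm_square[symmetric])
qed

lemma Re_cinner_self: "Re (cinner x x) = (norm x)\<^sup>2"
  by (simp add: cinner_self)

lemma cinner_self_eq_0 [simp]: "cinner x x = 0 \<longleftrightarrow> x = 0"
  by (simp add: cinner_self)

lemma cinner_mult_cinner_swap: "cinner x y * cinner y x = of_real ((cmod (cinner x y))\<^sup>2)"
  using cinner_commute[of y x] complex_norm_square[of "cinner x y"] by simp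

lemma cinner_span_eq_0:
  assumes "y \<in> vec.span S" and orth: "\<forall>x\<in>S. cinner x z = 0"
  shows "cinner y z = 0"
  using assms(1)
proof (induction rule: vec.span_induct)
  case base
  show ?case unfolding vec.subspace_def by (auto simp: cinner_add_left cinner_scale_left)
qed (use orth in blast)

lemma adj_matrix_mult: "adj (A ** B) = adj B ** adj A"
  by (simp add: adj_def matrix_matrix_mult_def vec_eq_iff mult.commute)

lemma adj_diff: "adj (A - B) = adj A - adj B"
  by (simp add: adj_def vec_eq_iff)

lemma cinner_adj: "cinner (A *v x) y = cinner x (adj A *v y)"
  unfolding cinner_def adj_def matrix_vector_mult_def
  by (simp add: sum_distrib_left sum_distrib_right) (subst sum.swap, simp add: mult_ac)

lemma cinner_hermitian: "adj A = A \<Longrightarrow> cinner (A *v x) y = cinner x (A *v y)"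
  by (metis cinner_adj)

lemma matrix_vector_mult_mat: "mat c *v x = c *s (x :: 'a::comm_semiring_1^'n)"
  by (simp add: vec_eq_iff matrix_vector_mult_def mat_def mult_delta_left)

lemma adj_mat_of_real [simp]: "adj (mat (complex_of_real r)) = mat (complex_of_real r)"
  by (simp add: adj_def mat_def vec_eq_iff)

lemma scaleR_eq_scale_of_real: "r *\<^sub>R (y :: complex^'n) = complex_of_real r *s y"
  by (simp add: vec_eq_iff) (simp add: scaleR_conv_of_real)

lemma norm_scale_of_real: "norm (complex_of_real r *s (y :: complex^'n)) = \<bar>r\<bar> * norm y"
  by (metis norm_scaleR scaleR_eq_scale_of_real)

lemma vec_subspace_imp_subspace: "vec.subspace U \<Longrightarrow> subspace (U :: (complex^'n) set)"
  unfolding subspace_def vec.subspace_def by (simp add: scaleR_eq_scale_of_real)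

section \<open>Spectral theorem for Hermitian matrices\<close>

lemma linear_coeff_nonpos_if_quadratic_nonneg:
  fixes a b :: real
  assumes nonneg: "\<forall>t. 0 \<le> 2 * t * a + t\<^sup>2 * b" and "0 \<le> b"
  shows "a \<le> 0"
proof (rule ccontr)
  assume "\<not> a \<le> 0"
  define t where "t = - a / (b + 1)"
  have "2 * t * a + t\<^sup>2 * b = a\<^sup>2 * (b - 2 * (b + 1)) / (b + 1)\<^sup>2"
    using \<open>0 \<le> b\<close> unfolding t_def power2_eq_square
    by (simp add: divide_simps) (simp add: algebra_simps)
  also have "\<dots> < 0"
    using \<open>0 \<le> b\<close> \<open>\<not> a \<le> 0\<close> by (intro divide_neg_pos mult_pos_neg) auto
  finally show False using nonneg by (metis not_le)
qed

lemma hermitian_psd_on_invariant_subspace_kernel: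
  fixes B :: "complex^'n^'n"
  assumes herm: "adj B = B" and U: "vec.subspace U" and inv: "\<forall>y\<in>U. B *v y \<in> U"
    and psd: "\<forall>y\<in>U. 0 \<le> Re (cinner (B *v y) y)"
    and "x \<in> U" and null: "Re (cinner (B *v x) x) = 0"
  shows "B *v x = 0"
proof -
  define z where "z = B *v x"
  have "z \<in> U" using inv \<open>x \<in> U\<close> z_def by blast
  have "0 \<le> 2 * t * (norm z)\<^sup>2 + t\<^sup>2 * Re (cinner (B *v z) z)" for t :: real
  proof -
    have "x + complex_of_real t *s z \<in> U"
      using \<open>x \<in> U\<close> \<open>z \<in> U\<close> U by (simp add: vec.subspace_add vec.subspace_scale)
    then have "0 \<le> Re (cinner (B *v (x + complex_of_real t *s z)) (x + complex_of_real t *s z))"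
      using psd by blast
    also have "\<dots> = Re (cinner (B *v x) x) + t * Re (cinner (B *v x) z) + t * Re (cinner (B *v z) x)
        + t\<^sup>2 * Re (cinner (B *v z) z)"
      by (simp add: vec.add vec.scale cinner_add_left cinner_add_right cinner_scale_left
          cinner_scale_right power2_eq_square algebra_simps)
    also have "\<dots> = 2 * t * (norm z)\<^sup>2 + t\<^sup>2 * Re (cinner (B *v z) z)"
      using null cinner_hermitian[OF herm, of z x] by (simp add: z_def Re_cinner_self)
    finally show ?thesis .
  qed
  then have "(norm z)\<^sup>2 \<le> 0"
    using linear_coeff_nonpos_if_quadratic_nonneg psd \<open>z \<in> U\<close> by blast
  then show ?thesis by (simp add: z_def)
qed

lemma continuous_on_Re_cinner_quadratic:
  "continuous_on S (\<lambda>y :: complex^'n. Re (cinner (A *v y) y))"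
  unfolding cinner_def matrix_vector_mult_def by (intro continuous_intros)

text \<open>A maximiser x of the Rayleigh quotient on the unit sphere of U, with maximum l, makes
  l - A positive semidefinite on U and null at x, hence an eigenvector.\<close>

lemma hermitian_eigenvector_in_invariant_subspace:
  fixes A :: "complex^'n^'n"
  assumes herm: "adj A = A" and U: "vec.subspace U" and inv: "\<forall>x\<in>U. A *v x \<in> U"
    and nontrivial: "U \<noteq> {0}"
  shows "\<exists>x\<in>U. norm x = 1 \<and> (\<exists>\<mu>. A *v x = \<mu> *s x)"
proof -
  let ?q = "\<lambda>y. Re (cinner (A *v y) y)"
  define K where "K = U \<inter> sphere 0 1"
  have "closed U" using vec_subspace_imp_subspace[OF U] closed_subspace by blast
  then have "compact K" unfolding K_def by (simp add: closed_Int_compact)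
  have normalize: "complex_of_real (1 / norm y) *s y \<in> K" if "y \<in> U" "y \<noteq> 0" for y
    using that U norm_scale_of_real[of "1 / norm y" y] by (simp add: K_def vec.subspace_scale)
  obtain y where "y \<in> U" "y \<noteq> 0" using nontrivial vec.subspace_0[OF U] by blast
  then have "K \<noteq> {}" using normalize by blast
  then obtain x where "x \<in> K" and max: "\<forall>y\<in>K. ?q y \<le> ?q x"
    using continuous_attains_sup[OF \<open>compact K\<close> _ continuous_on_Re_cinner_quadratic] by blast
  then have "x \<in> U" and "norm x = 1" by (auto simp: K_def)
  define B where "B = mat (complex_of_real (?q x)) - A"
  have B_apply: "B *v y = complex_of_real (?q x) *s y - A *v y" for y
    by (simp add: B_def matrix_vector_mult_diff_rdistrib matrix_vector_mult_mat)
  have "?q y \<le> ?q x * (norm y)\<^sup>2" if "y \<in> U" for y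
  proof (cases "y = 0")
    case False
    have "?q (complex_of_real (1 / norm y) *s y) = ?q y / (norm y)\<^sup>2"
      by (simp add: vec.scale cinner_scale_left cinner_scale_right power2_eq_square)
    then have "?q y / (norm y)\<^sup>2 \<le> ?q x" using max normalize[OF that False] by metis
    then show ?thesis using False by (simp add: divide_le_eq)
  qed simp
  then have "\<forall>y\<in>U. 0 \<le> Re (cinner (B *v y) y)"
    by (simp add: B_apply cinner_diff_left cinner_scale_left Re_cinner_self)
  moreover have "Re (cinner (B *v x) x) = 0"
    using \<open>norm x = 1\<close> by (simp add: B_apply cinner_diff_left cinner_scale_left Re_cinner_self)
  moreover have "adj B = B" by (simp add: B_def adj_diff herm)
  moreover have "\<forall>y\<in>U. B *v y \<in> U"
    using inv U by (simp add: B_apply vec.subspace_diff vec.subspace_scale)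
  ultimately have "B *v x = 0"
    using hermitian_psd_on_invariant_subspace_kernel[OF _ U _ _ \<open>x \<in> U\<close>] by blast
  then have "A *v x = complex_of_real (?q x) *s x" by (simp add: B_apply)
  then show ?thesis using \<open>x \<in> U\<close> \<open>norm x = 1\<close> by blast
qed

definition orthonormal :: "(complex^'n) set \<Rightarrow> bool" where
  "orthonormal B \<longleftrightarrow> (\<forall>b\<in>B. \<forall>c\<in>B. cinner b c = (if b = c then 1 else 0))"

definition orthonormal_basis :: "(complex^'n) set \<Rightarrow> bool" where
  "orthonormal_basis B \<longleftrightarrow> finite B \<and> orthonormal B \<and> vec.span B = UNIV"

lemma orthonormal_insert:
  assumes "orthonormal B" "cinner x x = 1" "\<forall>b\<in>B. cinner b x = 0"
  shows "orthonormal (insert x B)"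
proof -
  have "x \<notin> B" using assms(2,3) by force
  moreover have "cinner x b = 0" if "b \<in> B" for b
    using assms(3) cinner_commute[of x b] that by simp
  ultimately show ?thesis using assms unfolding orthonormal_def by auto
qed

lemma orthonormal_span_expansion:
  assumes "finite B" "orthonormal B" "x \<in> vec.span B"
  shows "x = (\<Sum>b\<in>B. cinner x b *s b)"
proof -
  obtain c where x: "x = (\<Sum>b\<in>B. c b *s b)" using assms(3) vec.span_finite[OF assms(1)] by auto
  have "cinner x b0 = c b0" if "b0 \<in> B" for b0
  proof -
    have "cinner x b0 = (\<Sum>b\<in>B. c b * cinner b b0)" by (simp add: x cinner_sum_left cinner_scale_left)
    also have "\<dots> = (\<Sum>b\<in>B. if b = b0 then c b else 0)"
      using assms(2) that by (intro sum.cong) (auto simp: orthonormal_def)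
    finally show ?thesis using assms(1) that by simp
  qed
  then show ?thesis by (simp add: x)
qed

lemma orthonormal_basis_expansion: "orthonormal_basis B \<Longrightarrow> x = (\<Sum>b\<in>B. cinner x b *s b)"
  unfolding orthonormal_basis_def using orthonormal_span_expansion by blast

lemma hermitian_eigenvector_orthogonal_slice:
  fixes A :: "complex^'n^'n"
  assumes herm: "adj A = A" and U: "vec.subspace U" and inv: "\<forall>y\<in>U. A *v y \<in> U"
    and "x \<in> U" and xx: "cinner x x = 1" and eigen: "A *v x = \<mu> *s x"
  defines "U' \<equiv> {y \<in> U. cinner y x = 0}"
  shows "vec.subspace U'" and "\<forall>y\<in>U'. A *v y \<in> U'" and "vec.dim U' < vec.dim U"
    and "\<forall>y\<in>U. y - cinner y x *s x \<in> U'"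
proof -
  show U': "vec.subspace U'"
    using U unfolding U'_def vec.subspace_def by (auto simp: cinner_add_left cinner_scale_left)
  show "\<forall>y\<in>U'. A *v y \<in> U'"
    using inv cinner_hermitian[OF herm, of _ x] by (simp add: U'_def eigen cinner_scale_right)
  have "x \<notin> U'" using xx by (simp add: U'_def)
  then have "U' \<subset> U" using \<open>x \<in> U\<close> unfolding U'_def by blast
  then show "vec.dim U' < vec.dim U" by (metis U U' vec.dim_psubset vec.span_eq_iff)
  show "\<forall>y\<in>U. y - cinner y x *s x \<in> U'"
    using \<open>x \<in> U\<close> U xx
    by (simp add: U'_def cinner_diff_left cinner_scale_left vec.subspace_diff vec.subspace_scale)
qed

lemma hermitian_invariant_subspace_eigenbasis:
  fixes A :: "complex^'n^'n"
  assumes herm: "adj A = A"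
  shows "vec.subspace U \<Longrightarrow> \<forall>x\<in>U. A *v x \<in> U \<Longrightarrow>
    \<exists>B. finite B \<and> B \<subseteq> U \<and> orthonormal B \<and> (\<forall>b\<in>B. \<exists>\<mu>. A *v b = \<mu> *s b) \<and> U \<subseteq> vec.span B"
proof (induction "vec.dim U" arbitrary: U rule: less_induct)
  case less
  show ?case
  proof (cases "U = {0}")
    case True
    then show ?thesis by (intro exI[of _ "{}"]) (auto simp: orthonormal_def vec.span_zero)
  next
    case False
    obtain x \<mu> where "x \<in> U" and "norm x = 1" and eigen: "A *v x = \<mu> *s x"
      using hermitian_eigenvector_in_invariant_subspace[OF herm less.prems False] by blast
    then have xx: "cinner x x = 1" by (simp add: cinner_self)
    define U' where "U' = {y \<in> U. cinner y x = 0}"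
    note slice = hermitian_eigenvector_orthogonal_slice[OF herm less.prems \<open>x \<in> U\<close> xx eigen,
        folded U'_def]
    obtain B where B: "finite B" "B \<subseteq> U'" "orthonormal B"
       "\<forall>b\<in>B. \<exists>\<mu>. A *v b = \<mu> *s b" "U' \<subseteq> vec.span B"
      using less.hyps[OF slice(3,1,2)] by blast
    have "U \<subseteq> vec.span (insert x B)"
    proof
      fix y assume "y \<in> U"
      then have "y - cinner y x *s x \<in> vec.span (insert x B)"
        using slice(4) B(5) vec.span_mono[of B "insert x B"] by auto
      then show "y \<in> vec.span (insert x B)"
        by (metis diff_add_cancel insertI1 vec.span_add vec.span_base vec.span_scale)
    qed
    moreover have "orthonormal (insert x B)"
      using orthonormal_insert[OF B(3) xx] B(2) by (auto simp: U'_def)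
    ultimately show ?thesis
      using B \<open>x \<in> U\<close> eigen by (intro exI[of _ "insert x B"]) (auto simp: U'_def)
  qed
qed

lemma hermitian_orthonormal_eigenbasis:
  fixes A :: "complex^'n^'n"
  assumes "adj A = A"
  shows "\<exists>B. orthonormal_basis B \<and> (\<forall>b\<in>B. \<exists>\<mu>. A *v b = \<mu> *s b)"
  using hermitian_invariant_subspace_eigenbasis[OF assms vec.subspace_UNIV]
  by (auto simp: orthonormal_basis_def)

definition diag_in_basis :: "(complex^'n) set \<Rightarrow> (complex^'n \<Rightarrow> complex) \<Rightarrow> complex^'n^'n" where
  "diag_in_basis B f = (\<chi> a c. \<Sum>b\<in>B. f b * b$a * cnj (b$c))"

lemma diag_in_basis_mult_vec: "diag_in_basis B f *v x = (\<Sum>b\<in>B. (f b * cinner x b) *s b)"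
proof -
  have "(\<Sum>c\<in>UNIV. (\<Sum>b\<in>B. f b * b$a * cnj (b$c)) * x$c)
      = (\<Sum>b\<in>B. f b * (\<Sum>c\<in>UNIV. x$c * cnj (b$c)) * b$a)" for a
    by (simp add: sum_distrib_left sum_distrib_right sum.swap[of _ B] mult_ac)
  then show ?thesis
    by (simp add: vec_eq_iff diag_in_basis_def matrix_vector_mult_def cinner_def)
qed

lemma diag_in_basis_eigenvector:
  assumes "orthonormal_basis B" "b0 \<in> B"
  shows "diag_in_basis B f *v b0 = f b0 *s b0"
proof -
  have "diag_in_basis B f *v b0 = (\<Sum>b\<in>B. if b = b0 then f b0 *s b0 else 0)"
    unfolding diag_in_basis_mult_vec using assms
    by (intro sum.cong) (auto simp: orthonormal_basis_def orthonormal_def)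
  then show ?thesis using assms by (simp add: orthonormal_basis_def)
qed

lemma diag_in_basis_unique:
  assumes B: "orthonormal_basis B" and eigen: "\<forall>b\<in>B. M *v b = g b *s b"
  shows "M = diag_in_basis B g"
proof -
  have "M *v x = diag_in_basis B g *v x" for x
  proof -
    have "M *v x = M *v (\<Sum>b\<in>B. cinner x b *s b)" using orthonormal_basis_expansion[OF B] by metis
    also have "\<dots> = (\<Sum>b\<in>B. cinner x b *s (g b *s b))" using eigen by (simp add: vec.sum vec.scale)
    also have "\<dots> = diag_in_basis B g *v x" by (simp add: diag_in_basis_mult_vec mult.commute)
    finally show ?thesis .
  qed
  then show ?thesis by (simp add: matrix_eq)
qed

lemma diag_in_basis_mult:
  assumes "orthonormal_basis B"
  shows "diag_in_basis B f ** diag_in_basis B g = diag_in_basis B (\<lambda>b. f b * g b)"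
  using assms
  by (intro diag_in_basis_unique)
     (simp_all add: matrix_vector_mul_assoc[symmetric] diag_in_basis_eigenvector vec.scale)

lemma adj_diag_in_basis: "adj (diag_in_basis B f) = diag_in_basis B (\<lambda>b. cnj (f b))"
  by (simp add: adj_def diag_in_basis_def vec_eq_iff mult_ac)

lemma psd_diag_in_basis:
  assumes "\<forall>b. 0 \<le> r b"
  shows "psd (diag_in_basis B (\<lambda>b. complex_of_real (r b)))"
proof -
  have "cinner (diag_in_basis B (\<lambda>b. complex_of_real (r b)) *v x) x
      = complex_of_real (\<Sum>b\<in>B. r b * (cmod (cinner x b))\<^sup>2)" for x
    by (simp add: diag_in_basis_mult_vec cinner_sum_left cinner_scale_left mult.assoc
        cinner_mult_cinner_swap)
  then show ?thesis using assms by (simp add: psd_def adj_diag_in_basis sum_nonneg)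
qed

section \<open>Pseudo-inverse and square root of the frame operator\<close>

lemma mp_inverse_unique:
  fixes A :: "complex^'n^'m" and X Y :: "complex^'m^'n"
  assumes "A ** X ** A = A" "X ** A ** X = X" "adj (A ** X) = A ** X" "adj (X ** A) = X ** A"
    and "A ** Y ** A = A" "Y ** A ** Y = Y" "adj (A ** Y) = A ** Y" "adj (Y ** A) = Y ** A"
  shows "X = Y"
proof -
  have "X = X ** (A ** X)" using assms(2) by (simp add: matrix_mul_assoc)
  also have "\<dots> = X ** adj X ** adj A" using assms(3) by (metis adj_matrix_mult matrix_mul_assoc)
  also have "adj A = adj A ** adj Y ** adj A" using assms(5) by (metis adj_matrix_mult matrix_mul_assoc)
  finally have "X = X ** (adj X ** adj A) ** (adj Y ** adj A)" by (simp add: matrix_mul_assoc)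
  also have "\<dots> = X ** (A ** X) ** (A ** Y)" using assms(3,7) by (simp add: adj_matrix_mult)
  also have "\<dots> = X ** A ** Y" using assms(2) by (simp add: matrix_mul_assoc)
  finally have X: "X = X ** A ** Y" .
  have "Y = (Y ** A) ** Y" using assms(6) by (simp add: matrix_mul_assoc)
  also have "\<dots> = adj A ** adj Y ** Y" using assms(8) by (metis adj_matrix_mult)
  also have "adj A = adj A ** adj X ** adj A" using assms(1) by (metis adj_matrix_mult matrix_mul_assoc)
  finally have "Y = (adj A ** adj X) ** (adj A ** adj Y) ** Y" by (simp add: matrix_mul_assoc)
  also have "\<dots> = (X ** A) ** (Y ** A) ** Y" using assms(4,8) by (simp add: adj_matrix_mult)
  also have "\<dots> = X ** A ** Y" using assms(6) by (metis matrix_mul_assoc)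
  finally show ?thesis using X by simp
qed

lemma mp_inverse_eqI:
  fixes A :: "complex^'n^'m" and X :: "complex^'m^'n"
  assumes "A ** X ** A = A" "X ** A ** X = X" "adj (A ** X) = A ** X" "adj (X ** A) = X ** A"
  shows "mp_inverse A = X"
  unfolding mp_inverse_def using assms mp_inverse_unique by (intro the_equality) blast+

lemma psd_eigenvector_sqrt:
  fixes R :: "complex^'n^'n"
  assumes R: "psd R" and RR: "R *v (R *v b) = complex_of_real m *s b" and "0 \<le> m"
  shows "R *v b = complex_of_real (sqrt m) *s b"
proof -
  define s where "s = sqrt m"
  define y where "y = R *v b - complex_of_real s *s b"
  have "complex_of_real m = complex_of_real s * complex_of_real s"
    using \<open>0 \<le> m\<close> by (simp add: s_def flip: of_real_mult)
  then have Ry: "R *v y = - complex_of_real s *s y"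
    by (simp add: y_def vec.diff vec.scale RR vec_eq_iff algebra_simps)
  have "0 \<le> Re (cinner (R *v y) y)" using R psd_def by blast
  also have "Re (cinner (R *v y) y) = - s * (norm y)\<^sup>2"
    by (simp add: Ry cinner_neg_left cinner_scale_left Re_cinner_self)
  finally have "y = 0 \<or> s = 0" using \<open>0 \<le> m\<close> by (simp add: s_def mult_le_0_iff)
  then show ?thesis
  proof
    assume "s = 0"
    then have "cinner (R *v b) (R *v b) = 0"
      using RR cinner_hermitian[of R "R *v b" b] R by (simp add: psd_def s_def)
    then show ?thesis using \<open>s = 0\<close> by (simp add: s_def)
  qed (simp add: y_def s_def)
qed

lemma psd_sqrt_diag_in_basis:
  assumes B: "orthonormal_basis B" and nonneg: "\<forall>b. 0 \<le> m b"
  shows "psd_sqrt (diag_in_basis B (\<lambda>b. complex_of_real (m b)))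
    = diag_in_basis B (\<lambda>b. complex_of_real (sqrt (m b)))"
  unfolding psd_sqrt_def
proof (rule the_equality)
  have "(\<lambda>b. complex_of_real (sqrt (m b)) * complex_of_real (sqrt (m b))) = (\<lambda>b. complex_of_real (m b))"
    using nonneg by (simp flip: of_real_mult)
  then show "psd (diag_in_basis B (\<lambda>b. complex_of_real (sqrt (m b)))) \<and>
    diag_in_basis B (\<lambda>b. complex_of_real (sqrt (m b))) ** diag_in_basis B (\<lambda>b. complex_of_real (sqrt (m b)))
      = diag_in_basis B (\<lambda>b. complex_of_real (m b))"
    using psd_diag_in_basis[of "\<lambda>b. sqrt (m b)" B] nonneg by (simp add: diag_in_basis_mult[OF B])
next
  fix R assume R: "psd R \<and> R ** R = diag_in_basis B (\<lambda>b. complex_of_real (m b))"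
  have "R *v b = complex_of_real (sqrt (m b)) *s b" if "b \<in> B" for b
    using R that B nonneg
    by (intro psd_eigenvector_sqrt) (simp_all add: matrix_vector_mul_assoc diag_in_basis_eigenvector)
  then show "R = diag_in_basis B (\<lambda>b. complex_of_real (sqrt (m b)))"
    by (intro diag_in_basis_unique[OF B]) auto
qed

lemma frame_operator_mult_vec: "frame_operator w *v x = (\<Sum>i\<in>UNIV. cinner x (w i) *s w i)"
proof -
  have "(\<Sum>c\<in>UNIV. (\<Sum>i\<in>UNIV. w i $ a * cnj (w i $ c)) * x$c)
      = (\<Sum>i\<in>UNIV. (\<Sum>c\<in>UNIV. x$c * cnj (w i$c)) * w i$a)" for a
    by (simp add: sum_distrib_left sum_distrib_right) (subst sum.swap, simp add: mult_ac)
  then show ?thesis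
    by (simp add: vec_eq_iff frame_operator_def matrix_vector_mult_def cinner_def)
qed

lemma adj_frame_operator: "adj (frame_operator w) = frame_operator w"
  by (simp add: adj_def frame_operator_def vec_eq_iff mult.commute)

lemma cinner_frame_operator:
  "cinner (frame_operator w *v x) x = complex_of_real (\<Sum>i\<in>UNIV. (cmod (cinner x (w i)))\<^sup>2)"
  by (simp add: frame_operator_mult_vec cinner_sum_left cinner_scale_left cinner_mult_cinner_swap)

lemma frame_operator_diag_in_basis:
  fixes w :: "'m::finite \<Rightarrow> complex^'n"
  obtains B lam where "orthonormal_basis B" "\<forall>b. 0 \<le> lam b"
    "frame_operator w = diag_in_basis B (\<lambda>b. complex_of_real (lam b))"
proof -
  obtain B where B: "orthonormal_basis B" and eigen: "\<forall>b\<in>B. \<exists>\<mu>. frame_operator w *v b = \<mu> *s b"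
    using hermitian_orthonormal_eigenbasis[OF adj_frame_operator] by blast
  define lam where "lam b = (\<Sum>i\<in>UNIV. (cmod (cinner b (w i)))\<^sup>2)" for b
  have "frame_operator w *v b = complex_of_real (lam b) *s b" if "b \<in> B" for b
  proof -
    obtain \<mu> where \<mu>: "frame_operator w *v b = \<mu> *s b" using eigen \<open>b \<in> B\<close> by blast
    have "cinner b b = 1" using B \<open>b \<in> B\<close> by (simp add: orthonormal_basis_def orthonormal_def)
    then have "\<mu> = cinner (frame_operator w *v b) b" by (simp add: \<mu> cinner_scale_left)
    also have "\<dots> = complex_of_real (lam b)" unfolding cinner_frame_operator lam_def ..
    finally show ?thesis using \<mu> by simp
  qed
  then have "frame_operator w = diag_in_basis B (\<lambda>b. complex_of_real (lam b))"
    by (intro diag_in_basis_unique[OF B]) blast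
  moreover have "\<forall>b. 0 \<le> lam b" by (simp add: lam_def sum_nonneg)
  ultimately show ?thesis using that B by blast
qed

text \<open>Since inverse 0 = 0, inverting the eigenvalues of S yields its pseudo-inverse.\<close>

lemma frame_operator_functional_calculus:
  fixes w :: "'m::finite \<Rightarrow> complex^'n"
  obtains B lam where "orthonormal_basis B" "\<forall>b. 0 \<le> lam b"
    "frame_operator w = diag_in_basis B (\<lambda>b. complex_of_real (lam b))"
    "mp_inverse (frame_operator w) = diag_in_basis B (\<lambda>b. complex_of_real (inverse (lam b)))"
    "psd_sqrt (mp_inverse (frame_operator w))
       = diag_in_basis B (\<lambda>b. complex_of_real (sqrt (inverse (lam b))))"
proof -
  obtain B lam where B: "orthonormal_basis B" and nonneg: "\<forall>b. 0 \<le> lam b"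
    and S: "frame_operator w = diag_in_basis B (\<lambda>b. complex_of_real (lam b))"
    using frame_operator_diag_in_basis by blast
  let ?D = "\<lambda>f. diag_in_basis B (\<lambda>b. complex_of_real (f b))"
  have mult: "?D f ** ?D g = ?D (\<lambda>b. f b * g b)" for f g
    using diag_in_basis_mult[OF B] by simp
  have herm: "adj (?D f) = ?D f" for f by (simp add: adj_diag_in_basis)
  have "mp_inverse (?D lam) = ?D (\<lambda>b. inverse (lam b))"
  proof (rule mp_inverse_eqI)
    have "lam b * inverse (lam b) * lam b = lam b"
      and "inverse (lam b) * lam b * inverse (lam b) = inverse (lam b)" for b
      by (cases "lam b = 0"; simp)+
    then show "?D lam ** ?D (\<lambda>b. inverse (lam b)) ** ?D lam = ?D lam"
      and "?D (\<lambda>b. inverse (lam b)) ** ?D lam ** ?D (\<lambda>b. inverse (lam b)) = ?D (\<lambda>b. inverse (lam b))"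
      unfolding mult by presburger+
  qed (simp_all only: mult herm)
  moreover have "psd_sqrt (?D (\<lambda>b. inverse (lam b))) = ?D (\<lambda>b. sqrt (inverse (lam b)))"
    using psd_sqrt_diag_in_basis[OF B, of "\<lambda>b. inverse (lam b)"] nonneg by simp_all
  ultimately show ?thesis using that B nonneg S by simp
qed

lemma frame_operator_pinv_identities:
  fixes w :: "'m::finite \<Rightarrow> complex^'n"
  defines "S \<equiv> frame_operator w" and "X \<equiv> mp_inverse (frame_operator w)"
    and "R \<equiv> psd_sqrt (mp_inverse (frame_operator w))"
  shows adj_pinv_frame_operator: "adj X = X"
    and frame_operator_pinv_commute: "S ** X = X ** S"
    and frame_operator_pinv_cancel: "S ** X ** S = S"
    and psd_sqrt_pinv_square: "R ** R = X"
    and adj_psd_sqrt_pinv: "adj R = R"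
    and psd_sqrt_pinv_sandwich: "R ** S ** R = S ** X"
    and psd_sqrt_pinv_commute: "R ** (S ** X) = S ** (X ** R)"
proof -
  obtain B lam where B: "orthonormal_basis B" and "\<forall>b. 0 \<le> lam b"
    and calculus: "S = diag_in_basis B (\<lambda>b. complex_of_real (lam b))"
      "X = diag_in_basis B (\<lambda>b. complex_of_real (inverse (lam b)))"
      "R = diag_in_basis B (\<lambda>b. complex_of_real (sqrt (inverse (lam b))))"
    using frame_operator_functional_calculus unfolding S_def X_def R_def by blast
  then have sq: "sqrt (inverse (lam b)) * sqrt (inverse (lam b)) = inverse (lam b)" for b
    by simp
  have mult: "diag_in_basis B (\<lambda>b. complex_of_real (f b)) ** diag_in_basis B (\<lambda>b. complex_of_real (g b))
      = diag_in_basis B (\<lambda>b. complex_of_real (f b * g b))" for f g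
    using diag_in_basis_mult[OF B] by simp
  show "adj X = X" "adj R = R" unfolding calculus by (simp_all add: adj_diag_in_basis)
  show "S ** X = X ** S" "R ** (S ** X) = S ** (X ** R)"
    unfolding calculus mult by (simp_all add: mult_ac)
  have "lam b * inverse (lam b) * lam b = lam b" for b by (cases "lam b = 0") simp_all
  then show "S ** X ** S = S" unfolding calculus mult by presburger
  show "R ** R = X" unfolding calculus mult sq ..
  show "R ** S ** R = S ** X" unfolding calculus mult
    by (metis (no_types) mult.commute mult.left_commute sq)
qed

lemma frame_operator_mult_vec_in_span: "frame_operator w *v y \<in> vec.span (range w)"
  unfolding frame_operator_mult_vec
  by (intro vec.span_sum vec.span_scale vec.span_base) auto

lemma frame_operator_pinv_fixes_frame:
  fixes w :: "'m::finite \<Rightarrow> complex^'n"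
  shows "(frame_operator w ** mp_inverse (frame_operator w)) *v w i = w i"
proof -
  let ?S = "frame_operator w" and ?X = "mp_inverse (frame_operator w)"
  define z where "z = w i - (?S ** ?X) *v w i"
  have "?S ** (?S ** ?X) = ?S"
    by (metis frame_operator_pinv_cancel frame_operator_pinv_commute matrix_mul_assoc)
  then have Sz: "?S *v z = 0" by (simp add: z_def vec.diff matrix_vector_mul_assoc)
  then have "(\<Sum>j\<in>UNIV. (cmod (cinner z (w j)))\<^sup>2) = 0"
    using cinner_frame_operator[of w z] by (metis cinner_zero_left of_real_eq_0_iff)
  then have z_orth: "cinner z (w j) = 0" for j
    by (simp add: sum_nonneg_eq_0_iff)
  have "cinner z ((?S ** ?X) *v w i) = cinner ((?X ** ?S) *v z) (w i)"
    by (simp add: cinner_adj adj_matrix_mult adj_frame_operator adj_pinv_frame_operator)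
  also have "\<dots> = 0" by (simp flip: matrix_vector_mul_assoc add: Sz)
  finally have "cinner z z = 0" using z_orth by (simp add: z_def cinner_diff_right)
  then show ?thesis by (simp add: z_def)
qed

lemma frame_operator_pinv_fixes_span:
  assumes "x \<in> vec.span (range w)"
  shows "(frame_operator w ** mp_inverse (frame_operator w)) *v x = x"
  using assms
proof (induction rule: vec.span_induct)
  case base
  show ?case unfolding vec.subspace_def by (auto simp: vec.add vec.scale)
qed (auto simp: frame_operator_pinv_fixes_frame)

section \<open>Mixed Gram matrices and the canonical dual\<close>

definition cross_gram :: "('m \<Rightarrow> complex^'n) \<Rightarrow> ('m \<Rightarrow> complex^'n) \<Rightarrow> complex^'m^'m" where
  "cross_gram u z = (\<chi> i j. cinner (u i) (z j))"

definition canonical_dual :: "('m::finite \<Rightarrow> complex^'n) \<Rightarrow> 'm \<Rightarrow> complex^'n" where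
  "canonical_dual w j = mp_inverse (frame_operator w) *v w j"

lemma cross_gram_mult:
  "cross_gram a b ** cross_gram c d = cross_gram (\<lambda>i. \<Sum>j\<in>UNIV. cinner (a i) (b j) *s c j) d"
  by (simp add: cross_gram_def matrix_matrix_mult_def vec_eq_iff cinner_sum_left cinner_scale_left)

lemma adj_cross_gram_canonical_dual:
  "adj (cross_gram w (canonical_dual w)) = cross_gram w (canonical_dual w)"
proof -
  have "cnj (cinner (w j) (canonical_dual w i)) = cinner (w i) (canonical_dual w j)" for i j
    unfolding canonical_dual_def
    by (metis cinner_commute cinner_hermitian[OF adj_pinv_frame_operator])
  then show ?thesis by (simp add: adj_def cross_gram_def vec_eq_iff)
qed

lemma cross_gram_canonical_dual_mult_self:
  "cross_gram w (canonical_dual w) ** cross_gram w z = cross_gram w z"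
proof -
  have "(\<Sum>j\<in>UNIV. cinner (w i) (canonical_dual w j) *s w j) = w i" for i
  proof -
    have "(\<Sum>j\<in>UNIV. cinner (w i) (canonical_dual w j) *s w j)
        = frame_operator w *v (mp_inverse (frame_operator w) *v w i)"
      unfolding canonical_dual_def frame_operator_mult_vec
      by (simp add: cinner_hermitian[OF adj_pinv_frame_operator])
    then show ?thesis
      by (simp add: matrix_vector_mul_assoc frame_operator_pinv_fixes_frame)
  qed
  then show ?thesis by (simp add: cross_gram_mult)
qed

lemma psd_sqrt_pinv_frame_in_span:
  "psd_sqrt (mp_inverse (frame_operator w)) *v w i \<in> vec.span (range w)"
proof -
  let ?S = "frame_operator w" and ?X = "mp_inverse (frame_operator w)"
    and ?R = "psd_sqrt (mp_inverse (frame_operator w))"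
  have "?R *v w i = ?R *v ((?S ** ?X) *v w i)" by (simp add: frame_operator_pinv_fixes_frame)
  also have "\<dots> = ?S *v ((?X ** ?R) *v w i)"
    by (simp add: matrix_vector_mul_assoc psd_sqrt_pinv_commute)
  finally show ?thesis by (simp add: frame_operator_mult_vec_in_span)
qed

lemma span_scaled_psd_sqrt_pinv_frame:
  assumes "k \<noteq> 0"
  shows "vec.span (range (\<lambda>i. k *s (psd_sqrt (mp_inverse (frame_operator w)) *v w i)))
    = vec.span (range w)"
proof
  let ?S = "frame_operator w" and ?R = "psd_sqrt (mp_inverse (frame_operator w))"
  show "vec.span (range (\<lambda>i. k *s (?R *v w i))) \<subseteq> vec.span (range w)"
    by (intro vec.span_minimal)
       (auto intro: vec.span_scale psd_sqrt_pinv_frame_in_span)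
  have "w i \<in> vec.span (range (\<lambda>j. k *s (?R *v w j)))" for i
  proof -
    have "w i = (?R ** ?S ** ?R) *v w i"
      by (simp add: psd_sqrt_pinv_sandwich frame_operator_pinv_fixes_frame)
    also have "\<dots> = (\<Sum>j\<in>UNIV. (cinner (?R *v w i) (w j) / k) *s (k *s (?R *v w j)))"
      using assms by (simp add: frame_operator_mult_vec vec.sum vec.scale flip: matrix_vector_mul_assoc)
    finally show ?thesis
      by (metis (no_types, lifting) rangeI vec.span_base vec.span_scale vec.span_sum)
  qed
  then show "vec.span (range w) \<subseteq> vec.span (range (\<lambda>i. k *s (?R *v w i)))"
    by (intro vec.span_minimal) auto
qed

text \<open>The frame operator R S R of R w is the orthogonal projection onto the span of w.\<close>

lemma psd_sqrt_pinv_frame_parseval: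
  assumes "x \<in> vec.span (range w)"
  shows "(\<Sum>i\<in>UNIV. (cmod (cinner x (psd_sqrt (mp_inverse (frame_operator w)) *v w i)))\<^sup>2) = (norm x)\<^sup>2"
proof -
  let ?S = "frame_operator w" and ?R = "psd_sqrt (mp_inverse (frame_operator w))"
  have herm: "cinner (?R *v y) z = cinner y (?R *v z)" for y z
    using cinner_hermitian[OF adj_psd_sqrt_pinv] .
  have "complex_of_real (\<Sum>i\<in>UNIV. (cmod (cinner x (?R *v w i)))\<^sup>2)
      = complex_of_real (\<Sum>i\<in>UNIV. (cmod (cinner (?R *v x) (w i)))\<^sup>2)"
    by (simp add: herm)
  also have "\<dots> = cinner (?S *v (?R *v x)) (?R *v x)"
    by (rule cinner_frame_operator[symmetric])
  also have "\<dots> = cinner (?R *v (?S *v (?R *v x))) x"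
    by (rule herm[symmetric])
  also have "\<dots> = cinner ((?R ** ?S ** ?R) *v x) x"
    by (simp add: matrix_vector_mul_assoc matrix_mul_assoc)
  also have "\<dots> = complex_of_real ((norm x)\<^sup>2)"
    using frame_operator_pinv_fixes_span[OF assms] by (simp add: psd_sqrt_pinv_sandwich cinner_self)
  finally show ?thesis using of_real_eq_iff by blast
qed

lemma cinner_psd_sqrt_pinv_frame:
  "cinner (psd_sqrt (mp_inverse (frame_operator w)) *v w i) (psd_sqrt (mp_inverse (frame_operator w)) *v w j)
    = cross_gram w (canonical_dual w) $ i $ j"
  by (simp add: cinner_hermitian[OF adj_psd_sqrt_pinv] matrix_vector_mul_assoc psd_sqrt_pinv_square
      cross_gram_def canonical_dual_def)

section \<open>A Welch-type bound for matrices with constant diagonal\<close>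

definition frob_sq :: "complex^'m^'m \<Rightarrow> real" where
  "frob_sq M = (\<Sum>i\<in>UNIV. \<Sum>j\<in>UNIV. (cmod (M$i$j))\<^sup>2)"

lemma of_real_frob_sq: "complex_of_real (frob_sq M) = trace (M ** adj M)"
proof -
  have "M$i$j * cnj (M$i$j) = complex_of_real ((cmod (M$i$j))\<^sup>2)" for i j
    using complex_norm_square[of "M$i$j"] by simp
  then show ?thesis by (simp add: frob_sq_def trace_def matrix_matrix_mult_def adj_def)
qed

lemma frob_sq_eq_0_iff: "frob_sq M = 0 \<longleftrightarrow> M = 0"
  by (simp add: frob_sq_def sum_nonneg sum_nonneg_eq_0_iff vec_eq_iff)

lemma matrix_diff_ldistrib: "(A :: complex^'m^'m) ** (B - C) = A ** B - A ** C"
  by (simp add: matrix_matrix_mult_def vec_eq_iff right_diff_distrib sum_subtractf)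

lemma matrix_diff_rdistrib: "((A :: complex^'m^'m) - B) ** C = A ** C - B ** C"
  by (simp add: matrix_matrix_mult_def vec_eq_iff left_diff_distrib sum_subtractf)

text \<open>The hypotheses say that G and H are projections with the same range, H the orthogonal one.\<close>

lemma frob_sq_diff_orthogonal_projection:
  fixes G H :: "complex^'m^'m"
  assumes GH: "G ** H = H" and HG: "H ** G = G" and herm: "adj H = H"
  shows "frob_sq (G - H) = frob_sq G - Re (trace G)"
proof -
  have "H ** H = H" by (metis GH HG matrix_mul_assoc)
  moreover have "trace H = trace G" using trace_mul_sym[of G H] GH HG by simp
  moreover have "H ** adj G = adj (G ** H)" by (simp add: adj_matrix_mult herm)
  ultimately have "complex_of_real (frob_sq (G - H)) = complex_of_real (frob_sq G) - trace G"
    by (simp add: of_real_frob_sq adj_diff herm matrix_diff_ldistrib matrix_diff_rdistrib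
        trace_sub GH)
  then have "trace G = complex_of_real (frob_sq G - frob_sq (G - H))" by simp
  then show ?thesis by simp
qed

lemma sum_eq_card_Max_iff:
  fixes f :: "'a \<Rightarrow> real"
  assumes "finite A"
  shows "sum f A = card A * Max (f ` A) \<longleftrightarrow> (\<forall>x\<in>A. f x = Max (f ` A))"
proof -
  have le: "\<forall>x\<in>A. 0 \<le> Max (f ` A) - f x" using assms by simp
  have "sum f A = card A * Max (f ` A) \<longleftrightarrow> (\<Sum>x\<in>A. Max (f ` A) - f x) = 0"
    by (auto simp: sum_subtractf)
  also have "\<dots> \<longleftrightarrow> (\<forall>x\<in>A. f x = Max (f ` A))"
    using sum_nonneg_eq_0_iff[OF assms, of "\<lambda>x. Max (f ` A) - f x"] le by auto
  finally show ?thesis .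
qed

lemma card_offdiag: "card ({(i, j). i \<noteq> j} :: ('m::finite \<times> 'm) set) = CARD('m) * (CARD('m) - 1)"
proof -
  have "({(i, j). i \<noteq> j} :: ('m \<times> 'm) set) = Sigma UNIV (\<lambda>i. UNIV - {i})" by auto
  then show ?thesis by (simp add: card_Diff_singleton)
qed

lemma frob_sq_diag_offdiag:
  "frob_sq M = (\<Sum>i\<in>UNIV. (cmod (M$i$i))\<^sup>2) + (\<Sum>(i, j)\<in>{(i, j). i \<noteq> j}. (cmod (M$i$j))\<^sup>2)"
proof -
  have "frob_sq M = (\<Sum>i\<in>UNIV. (cmod (M$i$i))\<^sup>2 + (\<Sum>j\<in>UNIV - {i}. (cmod (M$i$j))\<^sup>2))"
    unfolding frob_sq_def by (rule sum.cong[OF refl], rule sum.remove) auto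
  also have "\<dots> = (\<Sum>i\<in>UNIV. (cmod (M$i$i))\<^sup>2)
      + (\<Sum>(i, j)\<in>Sigma UNIV (\<lambda>i. UNIV - {i}). (cmod (M$i$j))\<^sup>2)"
    by (simp add: sum.distrib sum.Sigma)
  also have "Sigma UNIV (\<lambda>i. UNIV - {i}) = {(i, j). i \<noteq> j}" by auto
  finally show ?thesis .
qed

lemma frob_sq_diag_eq:
  fixes M :: "complex^'m^'m"
  assumes "\<forall>i. M$i$i = complex_of_real (d / CARD('m))"
  shows "frob_sq M = d\<^sup>2 / CARD('m) + (\<Sum>(i, j)\<in>{(i, j). i \<noteq> j}. (cmod (M$i$j))\<^sup>2)"
proof -
  have "real CARD('m) * (d / CARD('m))\<^sup>2 = d\<^sup>2 / CARD('m)" by (simp add: power2_eq_square)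
  then show ?thesis
    using assms by (simp only: frob_sq_diag_offdiag norm_of_real power2_abs) simp
qed

definition offdiag_max_sq :: "complex^'m^'m \<Rightarrow> real" where
  "offdiag_max_sq M = Max {(cmod (M$i$j))\<^sup>2 | i j. i \<noteq> j}"

definition welch_bound :: "real \<Rightarrow> real \<Rightarrow> real" where
  "welch_bound N d = d * (N - d) / (N\<^sup>2 * (N - 1))"

lemma welch_bound_nonneg: "0 \<le> d \<Longrightarrow> d \<le> N \<Longrightarrow> 1 < N \<Longrightarrow> 0 \<le> welch_bound N d"
  by (simp add: welch_bound_def)

lemma welch_bound_mult_card_offdiag: "1 < N \<Longrightarrow> N * (N - 1) * welch_bound N d = d - d\<^sup>2 / N"
  by (simp add: welch_bound_def field_simps power2_eq_square)

lemma sqrt_welch_bound: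
  assumes "0 < d" "d \<le> N" "1 < N"
  shows "sqrt (welch_bound N d) = d / N * sqrt ((N - d) / (d * (N - 1)))"
proof -
  have "welch_bound N d = (d / N)\<^sup>2 * ((N - d) / (d * (N - 1)))"
    using assms by (simp add: welch_bound_def field_simps power2_eq_square)
  then have "sqrt (welch_bound N d) = sqrt ((d / N)\<^sup>2) * sqrt ((N - d) / (d * (N - 1)))"
    by (simp only: real_sqrt_mult)
  then show ?thesis using assms by simp
qed

text \<open>The off-diagonal part of the squared Frobenius norm is at least d - d^2/N, which is
  N (N - 1) welch_bound N d; its largest entry is at least the average.\<close>

lemma offdiag_max_sq_welch_bound:
  fixes M :: "complex^'m^'m"
  assumes N: "2 \<le> CARD('m)" and diag: "\<forall>i. M$i$i = of_real (d / CARD('m))"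
    and frob: "d \<le> frob_sq M"
  shows welch_bound_le_offdiag_max_sq: "welch_bound CARD('m) d \<le> offdiag_max_sq M"
    and offdiag_max_sq_eq_welch_bound_iff: "offdiag_max_sq M = welch_bound CARD('m) d \<longleftrightarrow>
      frob_sq M = d \<and> (\<forall>i j. i \<noteq> j \<longrightarrow> (cmod (M$i$j))\<^sup>2 = welch_bound CARD('m) d)"
proof -
  let ?n = "real CARD('m)" and ?P = "{(i, j). i \<noteq> j} :: ('m \<times> 'm) set"
  define f where "f = (\<lambda>(i, j). (cmod (M$i$j))\<^sup>2)"
  have card_P: "real (card ?P) = ?n * (?n - 1)" using N by (simp add: card_offdiag)
  have max: "offdiag_max_sq M = Max (f ` ?P)"
    unfolding offdiag_max_sq_def f_def by (rule arg_cong[where f = Max]) auto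
  have "?P \<noteq> {}" using card_P N by force
  have frob_split: "frob_sq M = d\<^sup>2 / ?n + sum f ?P"
    unfolding frob_sq_diag_eq[OF diag] f_def ..
  have welch: "?n * (?n - 1) * welch_bound ?n d = d - d\<^sup>2 / ?n"
    using N by (intro welch_bound_mult_card_offdiag) simp
  have sum_le: "sum f ?P \<le> ?n * (?n - 1) * offdiag_max_sq M"
    using sum_bounded_above[of ?P f "Max (f ` ?P)"] card_P max by simp
  have "?n * (?n - 1) * welch_bound ?n d \<le> ?n * (?n - 1) * offdiag_max_sq M"
    using welch frob_split frob sum_le by linarith
  moreover have "0 < ?n * (?n - 1)" using N by simp
  ultimately show "welch_bound ?n d \<le> offdiag_max_sq M" by (simp add: mult_le_cancel_left_pos)
  show "offdiag_max_sq M = welch_bound ?n d \<longleftrightarrow>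
      frob_sq M = d \<and> (\<forall>i j. i \<noteq> j \<longrightarrow> (cmod (M$i$j))\<^sup>2 = welch_bound ?n d)"
  proof
    assume eq: "offdiag_max_sq M = welch_bound ?n d"
    then have "frob_sq M = d" and "sum f ?P = card ?P * Max (f ` ?P)"
      using welch frob_split frob sum_le card_P max by auto
    then show "frob_sq M = d \<and> (\<forall>i j. i \<noteq> j \<longrightarrow> (cmod (M$i$j))\<^sup>2 = welch_bound ?n d)"
      using sum_eq_card_Max_iff[of ?P f] eq max by (auto simp: f_def)
  next
    assume "frob_sq M = d \<and> (\<forall>i j. i \<noteq> j \<longrightarrow> (cmod (M$i$j))\<^sup>2 = welch_bound ?n d)"
    then have "\<forall>p\<in>?P. f p = welch_bound ?n d" by (auto simp: f_def)
    then have "f ` ?P = (\<lambda>_. welch_bound ?n d) ` ?P" by (intro image_cong) auto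
    also have "\<dots> = {welch_bound ?n d}"
      using \<open>?P \<noteq> {}\<close> by (simp only: image_constant_conv if_False)
    finally have "f ` ?P = {welch_bound ?n d}" .
    then show "offdiag_max_sq M = welch_bound ?n d" using max by simp
  qed
qed

lemma offdiag_max_sq_eq_welch_bound_if_equimodular:
  fixes M :: "complex^'m^'m"
  assumes N: "2 \<le> CARD('m)" and diag: "\<forall>i. M$i$i = of_real (d / CARD('m))"
    and frob: "frob_sq M = d" and equimodular: "\<forall>i j. i \<noteq> j \<longrightarrow> cmod (M$i$j) = c"
  shows "offdiag_max_sq M = welch_bound CARD('m) d"
proof -
  let ?n = "real CARD('m)" and ?P = "{(i, j). i \<noteq> j} :: ('m \<times> 'm) set"
  have "(\<Sum>(i, j)\<in>?P. (cmod (M$i$j))\<^sup>2) = (\<Sum>(i, j)\<in>?P. c\<^sup>2)"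
    using equimodular by (intro sum.cong) auto
  also have "\<dots> = ?n * (?n - 1) * c\<^sup>2" using N by (simp add: card_offdiag)
  finally have "d = d\<^sup>2 / ?n + ?n * (?n - 1) * c\<^sup>2"
    using frob frob_sq_diag_eq[OF diag] by simp
  moreover have "?n * (?n - 1) * welch_bound ?n d = d - d\<^sup>2 / ?n"
    using N by (intro welch_bound_mult_card_offdiag) simp
  ultimately have "?n * (?n - 1) * c\<^sup>2 = ?n * (?n - 1) * welch_bound ?n d" by linarith
  then have "c\<^sup>2 = welch_bound ?n d" using N by simp
  then show ?thesis
    using offdiag_max_sq_eq_welch_bound_iff[OF N diag] frob equimodular by simp
qed

lemma scaleR_mat_1_plus_scaleR_nth:
  "((r *\<^sub>R (mat 1 + s *\<^sub>R Q)) :: complex^'m^'m) $ i $ j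
    = complex_of_real r * ((if i = j then 1 else 0) + complex_of_real s * Q$i$j)"
  by (simp add: mat_def) (simp add: scaleR_conv_of_real)

lemma cnj_sgn: "cnj (sgn z) = sgn (cnj z)"
  by (simp add: sgn_eq)

lemma gen_signature_decomposition:
  fixes A :: "complex^'m^'m" and r s :: real
  assumes herm: "adj A = A" and diag: "\<forall>i. A$i$i = complex_of_real r"
    and equimodular: "\<forall>i j. i \<noteq> j \<longrightarrow> cmod (A$i$j) = r * s"
  shows "\<exists>Q. gen_signature Q \<and> A = r *\<^sub>R (mat 1 + s *\<^sub>R Q)"
proof -
  have cnj_A: "cnj (A$j$i) = A$i$j" for i j
    using herm unfolding adj_def by (metis vec_lambda_beta)
  \<comment> \<open>Off the diagonal Q carries the phase of A; where A vanishes, r s = 0 and any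
    unimodular value will do.\<close>
  define Q :: "complex^'m^'m" where
    "Q = (\<chi> i j. if i = j then 0 else if A$i$j = 0 then 1 else sgn (A$i$j))"
  have "gen_signature Q"
    unfolding gen_signature_def
    by (auto simp: Q_def adj_def vec_eq_iff cnj_sgn cnj_A norm_sgn)
       (metis cnj_A complex_cnj_zero_iff)+
  moreover have "A$i$j = complex_of_real r * ((if i = j then 1 else 0) + complex_of_real s * Q$i$j)"
    for i j
  proof (cases "i = j")
    case True
    then show ?thesis using diag by (simp add: Q_def)
  next
    case False
    then have rs: "complex_of_real r * complex_of_real s = complex_of_real (cmod (A$i$j))"
      using equimodular by simp
    show ?thesis
    proof (cases "A$i$j = 0")
      case True
      then show ?thesis using rs False by (simp add: Q_def)
    next
      case nonzero: False
      then show ?thesis using rs \<open>i \<noteq> j\<close> by (simp add: Q_def sgn_eq mult.assoc[symmetric])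
    qed
  qed
  then have "A = r *\<^sub>R (mat 1 + s *\<^sub>R Q)"
    unfolding vec_eq_iff scaleR_mat_1_plus_scaleR_nth by blast
  ultimately show ?thesis by blast
qed

lemma gen_signature_decomposition_iff:
  fixes A :: "complex^'m^'m" and r s :: real
  assumes "0 \<le> r" "0 \<le> s"
  shows "(\<exists>Q. gen_signature Q \<and> A = r *\<^sub>R (mat 1 + s *\<^sub>R Q)) \<longleftrightarrow>
    adj A = A \<and> (\<forall>i. A$i$i = complex_of_real r) \<and> (\<forall>i j. i \<noteq> j \<longrightarrow> cmod (A$i$j) = r * s)"
proof
  assume "\<exists>Q. gen_signature Q \<and> A = r *\<^sub>R (mat 1 + s *\<^sub>R Q)"
  then obtain Q where Q: "gen_signature Q" and A: "A = r *\<^sub>R (mat 1 + s *\<^sub>R Q)" by blast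
  have "cnj (Q$j$i) = Q$i$j" for i j
    using Q unfolding gen_signature_def adj_def by (metis vec_lambda_beta)
  moreover have entry: "A$i$j = complex_of_real r * ((if i = j then 1 else 0) + complex_of_real s * Q$i$j)"
    for i j
    unfolding A by (rule scaleR_mat_1_plus_scaleR_nth)
  ultimately show "adj A = A \<and> (\<forall>i. A$i$i = complex_of_real r) \<and> (\<forall>i j. i \<noteq> j \<longrightarrow> cmod (A$i$j) = r * s)"
    using Q assms unfolding gen_signature_def by (simp add: adj_def vec_eq_iff entry norm_mult)
qed (use gen_signature_decomposition in blast)

lemma cinner_scale_scale: "cinner (k *s x) (k *s y) = complex_of_real ((cmod k)\<^sup>2) * cinner x y"
proof -
  have "cinner (k *s x) (k *s y) = (k * cnj k) * cinner x y"
    by (simp add: cinner_scale_left cinner_scale_right mult.assoc)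
  then show ?thesis by (simp only: complex_norm_square)
qed

lemma ex_const_offdiag_scaled_sq_iff:
  fixes f :: "'a \<Rightarrow> 'a \<Rightarrow> real"
  assumes "0 < a" and nonneg: "\<forall>i j. 0 \<le> f i j"
  shows "(\<exists>c. \<forall>i j. i \<noteq> j \<longrightarrow> a * (f i j)\<^sup>2 = c) \<longleftrightarrow> (\<exists>c. \<forall>i j. i \<noteq> j \<longrightarrow> f i j = c)"
proof
  assume "\<exists>c. \<forall>i j. i \<noteq> j \<longrightarrow> a * (f i j)\<^sup>2 = c"
  then obtain c where c: "\<forall>i j. i \<noteq> j \<longrightarrow> a * (f i j)\<^sup>2 = c" by blast
  have "f i j = sqrt (c / a)" if "i \<noteq> j" for i j
  proof -
    have "(f i j)\<^sup>2 = c / a" using c that \<open>0 < a\<close> by (auto simp: field_simps)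
    then show ?thesis using nonneg real_sqrt_unique by metis
  qed
  then show "\<exists>c. \<forall>i j. i \<noteq> j \<longrightarrow> f i j = c" by blast
qed auto

lemma tight_frame_scaled_psd_sqrt_pinv_frame:
  assumes "k \<noteq> 0"
  shows "tight_frame (vec.span (range w)) (\<lambda>i. k *s (psd_sqrt (mp_inverse (frame_operator w)) *v w i))"
  unfolding tight_frame_def is_frame_def
proof (intro conjI allI exI[of _ "(cmod k)\<^sup>2"] ballI)
  let ?R = "psd_sqrt (mp_inverse (frame_operator w))"
  show "k *s (?R *v w i) \<in> vec.span (range w)" for i
    by (intro vec.span_scale psd_sqrt_pinv_frame_in_span)
  show "vec.span (range (\<lambda>i. k *s (?R *v w i))) = vec.span (range w)"
    using span_scaled_psd_sqrt_pinv_frame[OF assms] .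
  show "0 < (cmod k)\<^sup>2" using assms by simp
  fix x assume "x \<in> vec.span (range w)"
  then show "(\<Sum>i\<in>UNIV. (cmod (cinner x (k *s (?R *v w i))))\<^sup>2) = (cmod k)\<^sup>2 * (norm x)\<^sup>2"
    using psd_sqrt_pinv_frame_parseval[of x w]
    by (simp add: cinner_scale_right norm_mult power_mult_distrib flip: sum_distrib_left)
qed

lemma is_ETF_scaled_psd_sqrt_pinv_frame_iff:
  fixes w :: "'m::finite \<Rightarrow> complex^'n"
  defines "H \<equiv> cross_gram w (canonical_dual w)"
  assumes "k \<noteq> 0"
  shows "is_ETF N d (vec.span (range w)) (\<lambda>i. k *s (psd_sqrt (mp_inverse (frame_operator w)) *v w i))
    \<longleftrightarrow> N = CARD('m) \<and> vec.dim (vec.span (range w)) = d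
      \<and> (\<forall>i. complex_of_real ((cmod k)\<^sup>2) * H$i$i = 1) \<and> (\<exists>c. \<forall>i j. i \<noteq> j \<longrightarrow> cmod (H$i$j) = c)"
proof -
  let ?psi = "\<lambda>i. k *s (psd_sqrt (mp_inverse (frame_operator w)) *v w i)"
  have gram: "cinner (?psi i) (?psi j) = complex_of_real ((cmod k)\<^sup>2) * H$i$j" for i j
    by (simp add: cinner_scale_scale cinner_psd_sqrt_pinv_frame H_def)
  have "norm (?psi i) = 1 \<longleftrightarrow> cinner (?psi i) (?psi i) = 1" for i
    by (simp add: cinner_self abs_square_eq_1 del: of_real_power)
  then have unit: "(\<forall>i. norm (?psi i) = 1) \<longleftrightarrow> (\<forall>i. complex_of_real ((cmod k)\<^sup>2) * H$i$i = 1)"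
    by (simp add: gram)
  have modulus: "(cmod (cinner (?psi i) (?psi j)))\<^sup>2 = (cmod k) ^ 4 * (cmod (H$i$j))\<^sup>2" for i j
    by (simp add: gram norm_mult power_mult_distrib flip: power_mult del: of_real_power)
  have "(\<exists>c. \<forall>i j. i \<noteq> j \<longrightarrow> (cmod (cinner (?psi i) (?psi j)))\<^sup>2 = c)
      \<longleftrightarrow> (\<exists>c. \<forall>i j. i \<noteq> j \<longrightarrow> cmod (H$i$j) = c)"
    unfolding modulus using \<open>k \<noteq> 0\<close> by (intro ex_const_offdiag_scaled_sq_iff) auto
  then show ?thesis
    using unit tight_frame_scaled_psd_sqrt_pinv_frame[OF \<open>k \<noteq> 0\<close>] by (auto simp: is_ETF_def)
qed

section \<open>Oblique dual frames\<close>

lemma subspace_orth_compl: "vec.subspace (orth_compl U)"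
  unfolding vec.subspace_def orth_compl_def by (simp add: cinner_add_left cinner_scale_left)

lemma obl_proj_unique:
  assumes "direct_sum_whole A B" "a \<in> A" "f - a \<in> B" "a' \<in> A" "f - a' \<in> B"
  shows "a = a'"
proof -
  have A: "vec.subspace A" and B: "vec.subspace B" and "A \<inter> B = {0}"
    using assms(1) unfolding direct_sum_whole_def by blast+
  have "a' - a \<in> A" using vec.subspace_diff[OF A] assms by blast
  moreover have "(f - a) - (f - a') \<in> B" using vec.subspace_diff[OF B] assms by blast
  ultimately have "a' - a \<in> A \<inter> B" by simp
  then show ?thesis using \<open>A \<inter> B = {0}\<close> by simp
qed

lemma obl_proj_eqI:
  "direct_sum_whole A B \<Longrightarrow> a \<in> A \<Longrightarrow> f - a \<in> B \<Longrightarrow> obl_proj A B f = a"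
  unfolding obl_proj_def using obl_proj_unique by blast

lemma obl_proj_mem:
  assumes "direct_sum_whole A B"
  shows "obl_proj A B f \<in> A \<and> f - obl_proj A B f \<in> B"
proof -
  obtain a b where "a \<in> A" "b \<in> B" "f = a + b" using assms unfolding direct_sum_whole_def by blast
  then show ?thesis using obl_proj_eqI[OF assms, of a f] by simp
qed

lemma obl_proj_id: "direct_sum_whole A B \<Longrightarrow> a \<in> A \<Longrightarrow> obl_proj A B a = a"
  by (rule obl_proj_eqI) (auto simp: direct_sum_whole_def vec.subspace_0)

locale oblique_dual_pair =
  fixes W V :: "(complex^'n) set" and w v :: "'m::finite \<Rightarrow> complex^'n"
  assumes direct_sum: "direct_sum_whole W (orth_compl V)"
    and frame: "is_frame W w"
    and dual: "oblique_dual_frame W V w v"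
begin

lemma frame_mem: "w i \<in> W"
  using frame by (simp add: is_frame_def)

lemma span_frame: "vec.span (range w) = W"
  using frame by (simp add: is_frame_def)

lemma subspace_W: "vec.subspace W"
  using direct_sum by (simp add: direct_sum_whole_def)

lemma dual_mem: "v i \<in> V"
  using dual by (simp add: oblique_dual_frame_def is_frame_def)

lemma subspace_V: "vec.subspace V"
  using dual by (metis oblique_dual_frame_def is_frame_def vec.subspace_span)

lemma reconstruction: "x \<in> W \<Longrightarrow> x = (\<Sum>i\<in>UNIV. cinner x (v i) *s w i)"
  using dual obl_proj_id[OF direct_sum] by (metis oblique_dual_frame_def)

lemma orth_W_mem_V_eq_0:
  assumes "x \<in> V" and orth: "\<forall>y\<in>W. cinner y x = 0"
  shows "x = 0"
proof -
  have "cinner f x = 0" for f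
  proof -
    obtain a b where "a \<in> W" "b \<in> orth_compl V" "f = a + b"
      using direct_sum unfolding direct_sum_whole_def by blast
    then show ?thesis using \<open>x \<in> V\<close> orth by (simp add: orth_compl_def cinner_add_left)
  qed
  then show ?thesis using cinner_self_eq_0 by blast
qed

text \<open>The complementary decomposition uses the adjoint f \<mapsto> \<Sum> \<langle>f, w i\<rangle> v i of the
  reconstruction formula.\<close>

lemma direct_sum_V_orth_W: "direct_sum_whole V (orth_compl W)"
  unfolding direct_sum_whole_def
proof (intro conjI allI subspace_V subspace_orth_compl)
  show "V \<inter> orth_compl W = {0}"
  proof (intro equalityI subsetI)
    fix x assume x: "x \<in> V \<inter> orth_compl W"
    then have "\<forall>y\<in>W. cinner y x = 0" by (simp add: orth_compl_def cinner_commute[of _ x])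
    then show "x \<in> {0}" using orth_W_mem_V_eq_0 x by simp
  qed (simp add: subspace_V subspace_orth_compl vec.subspace_0)
  fix f
  define p where "p = (\<Sum>i\<in>UNIV. cinner f (w i) *s v i)"
  have "p \<in> V" unfolding p_def using subspace_V dual_mem
    by (intro vec.subspace_sum) (auto simp: vec.subspace_scale)
  moreover have "cinner p y = cinner f y" if "y \<in> W" for y
  proof -
    have "cinner p y = cinner f (\<Sum>i\<in>UNIV. cinner y (v i) *s w i)"
      by (simp add: p_def cinner_sum_left cinner_sum_right cinner_scale_left cinner_scale_right
          cinner_commute[of y] mult.commute)
    then show ?thesis using reconstruction[OF that] by simp
  qed
  then have "f - p \<in> orth_compl W" by (simp add: orth_compl_def cinner_diff_left)
  ultimately show "\<exists>a\<in>V. \<exists>b\<in>orth_compl W. f = a + b" by (metis diff_add_cancel add.commute)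
qed

lemma cinner_obl_proj_V:
  assumes "x \<in> W"
  shows "cinner x (obl_proj V (orth_compl W) y) = cinner x y"
proof -
  have "y - obl_proj V (orth_compl W) y \<in> orth_compl W" using obl_proj_mem[OF direct_sum_V_orth_W] by blast
  then have "cinner (y - obl_proj V (orth_compl W) y) x = 0" using assms by (simp add: orth_compl_def)
  then have "cinner (obl_proj V (orth_compl W) y) x = cinner y x" by (simp add: cinner_diff_left)
  then show ?thesis by (metis cinner_commute)
qed

lemma trace_cross_gram: "trace (cross_gram w v) = of_nat (vec.dim W)"
proof -
  obtain C where C: "C \<subseteq> W" "vec.independent C" "W \<subseteq> vec.span C" "card C = vec.dim W"
    using vec.basis_exists by blast
  have "finite C" using C(2) vec.finiteI_independent by blast
  have "\<forall>i. \<exists>r. w i = (\<Sum>c\<in>C. r c *s c)"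
    using frame_mem C(3) vec.span_finite[OF \<open>finite C\<close>] by blast
  then obtain r where r: "\<And>i. w i = (\<Sum>c\<in>C. r i c *s c)" by metis
  have coefficient: "(\<Sum>i\<in>UNIV. cinner b (v i) * r i b) = 1" if "b \<in> C" for b
  proof -
    define k where "k c = (\<Sum>i\<in>UNIV. cinner b (v i) * r i c) - (if c = b then 1 else 0)" for c
    have "b = (\<Sum>i\<in>UNIV. cinner b (v i) *s w i)" using reconstruction \<open>b \<in> C\<close> C(1) by blast
    also have "\<dots> = (\<Sum>i\<in>UNIV. \<Sum>c\<in>C. (cinner b (v i) * r i c) *s c)"
      by (simp add: r vec.scale_sum_right)
    also have "\<dots> = (\<Sum>c\<in>C. (\<Sum>i\<in>UNIV. cinner b (v i) * r i c) *s c)"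
      by (subst sum.swap) (simp add: vec.scale_sum_left)
    finally have expansion: "b = (\<Sum>c\<in>C. (\<Sum>i\<in>UNIV. cinner b (v i) * r i c) *s c)" .
    have "(\<Sum>c\<in>C. (if c = b then 1 else 0) *s c) = (\<Sum>c\<in>C. if c = b then c else 0)"
      by (rule sum.cong) auto
    then have trivial: "b = (\<Sum>c\<in>C. (if c = b then 1 else 0) *s c)"
      using \<open>finite C\<close> \<open>b \<in> C\<close> by simp
    have "(\<Sum>c\<in>C. k c *s c) = 0"
      unfolding k_def
      by (simp add: vec.scale_left_diff_distrib sum_subtractf flip: expansion trivial)
    then have "k b = 0" using C(2) \<open>b \<in> C\<close> vec.independent_explicit by blast
    then show ?thesis by (simp add: k_def)
  qed
  have "trace (cross_gram w v) = (\<Sum>i\<in>UNIV. \<Sum>c\<in>C. r i c * cinner c (v i))"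
    unfolding trace_def cross_gram_def by (subst r) (simp add: cinner_sum_left cinner_scale_left)
  also have "\<dots> = (\<Sum>c\<in>C. \<Sum>i\<in>UNIV. cinner c (v i) * r i c)"
    by (subst sum.swap) (simp add: mult.commute)
  also have "\<dots> = of_nat (card C)" using coefficient by simp
  finally show ?thesis using C(4) by simp
qed

lemma dim_le_card: "vec.dim W \<le> CARD('m)"
proof -
  have "vec.dim W \<le> card (range w)" using vec.dim_le_card[of W "range w"] span_frame by auto
  also have "\<dots> \<le> CARD('m)" by (rule card_image_le) simp
  finally show ?thesis .
qed

lemma cross_gram_mult_canonical:
  "cross_gram w v ** cross_gram w (canonical_dual w) = cross_gram w (canonical_dual w)"
  using reconstruction[OF frame_mem] by (simp add: cross_gram_mult)

lemma frob_sq_cross_gram: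
  "frob_sq (cross_gram w v) = frob_sq (cross_gram w v - cross_gram w (canonical_dual w)) + vec.dim W"
  using frob_sq_diff_orthogonal_projection[OF cross_gram_mult_canonical
      cross_gram_canonical_dual_mult_self adj_cross_gram_canonical_dual]
  by (simp add: trace_cross_gram)

lemma cross_gram_eq_canonical_iff:
  "cross_gram w v = cross_gram w (canonical_dual w)
    \<longleftrightarrow> (\<forall>j. v j = obl_proj V (orth_compl W) (canonical_dual w j))"
proof
  assume "\<forall>j. v j = obl_proj V (orth_compl W) (canonical_dual w j)"
  then have "cinner (w i) (v j) = cinner (w i) (canonical_dual w j)" for i j
    using cinner_obl_proj_V[OF frame_mem] by metis
  then show "cross_gram w v = cross_gram w (canonical_dual w)" by (simp add: cross_gram_def)
next
  assume gram: "cross_gram w v = cross_gram w (canonical_dual w)"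
  show "\<forall>j. v j = obl_proj V (orth_compl W) (canonical_dual w j)"
  proof
    fix j
    define z where "z = v j - obl_proj V (orth_compl W) (canonical_dual w j)"
    have "z \<in> V"
      by (simp add: z_def vec.subspace_diff[OF subspace_V] dual_mem obl_proj_mem[OF direct_sum_V_orth_W])
    have "cinner (w i) z = 0" for i
      using gram cinner_obl_proj_V[OF frame_mem]
      by (simp add: z_def cinner_diff_right cross_gram_def vec_eq_iff)
    then have "\<forall>y\<in>W. cinner y z = 0"
      using cinner_span_eq_0[of _ "range w" z] span_frame by blast
    then show "v j = obl_proj V (orth_compl W) (canonical_dual w j)"
      using orth_W_mem_V_eq_0[OF \<open>z \<in> V\<close>] by (simp add: z_def)
  qed
qed

lemma hermitian_cross_gram_iff:
  "adj (cross_gram w v) = cross_gram w v \<longleftrightarrow> cross_gram w v = cross_gram w (canonical_dual w)"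
proof
  assume herm: "adj (cross_gram w v) = cross_gram w v"
  have "cross_gram w v = adj (cross_gram w (canonical_dual w) ** cross_gram w v)"
    by (simp add: cross_gram_canonical_dual_mult_self herm)
  also have "\<dots> = cross_gram w v ** cross_gram w (canonical_dual w)"
    by (simp add: adj_matrix_mult herm adj_cross_gram_canonical_dual)
  finally show "cross_gram w v = cross_gram w (canonical_dual w)"
    by (simp add: cross_gram_mult_canonical)
qed (simp add: adj_cross_gram_canonical_dual)

end

locale equal_diagonal_oblique_dual = oblique_dual_pair W V w v
  for W V :: "(complex^'n) set" and w v :: "'m::finite \<Rightarrow> complex^'n" +
  assumes equal_diagonal: "\<forall>i j. cinner (w i) (v i) = cinner (w j) (v j)"
    and card_ge_2: "2 \<le> CARD('m)"
    and W_nontrivial: "W \<noteq> {0}"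
begin

lemma W_not_subset_0: "\<not> W \<subseteq> {0}"
  using W_nontrivial vec.subspace_0[OF subspace_W] by auto

lemma dim_pos: "0 < vec.dim W"
  using W_not_subset_0 vec.dim_eq_0 by (metis gr0I)

lemma cross_gram_diag: "cross_gram w v $ i $ i = complex_of_real (vec.dim W / CARD('m))"
proof -
  have "trace (cross_gram w v) = (\<Sum>k\<in>(UNIV :: 'm set). cross_gram w v $ i $ i)"
    unfolding trace_def cross_gram_def vec_lambda_beta using equal_diagonal by (intro sum.cong) auto
  then have "of_nat (vec.dim W) = of_nat CARD('m) * cross_gram w v $ i $ i"
    by (simp add: trace_cross_gram)
  then show ?thesis using card_ge_2 by (simp add: field_simps)
qed

lemma dim_le_frob_sq_cross_gram: "vec.dim W \<le> frob_sq (cross_gram w v)"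
  using frob_sq_cross_gram by (simp add: frob_sq_def sum_nonneg)

lemma frob_sq_cross_gram_eq_dim_iff:
  "frob_sq (cross_gram w v) = vec.dim W \<longleftrightarrow> cross_gram w v = cross_gram w (canonical_dual w)"
  using frob_sq_cross_gram by (simp add: frob_sq_eq_0_iff)

lemma welch_bound_le_offdiag_max_sq_cross_gram:
  "welch_bound CARD('m) (vec.dim W) \<le> offdiag_max_sq (cross_gram w v)"
  using welch_bound_le_offdiag_max_sq[OF card_ge_2] cross_gram_diag dim_le_frob_sq_cross_gram
  by blast

lemma welch_bound_attained_iff:
  "offdiag_max_sq (cross_gram w v) = welch_bound CARD('m) (vec.dim W) \<longleftrightarrow>
    cross_gram w v = cross_gram w (canonical_dual w) \<and>
    (\<forall>i j. i \<noteq> j \<longrightarrow> cmod (cross_gram w v $ i $ j) = sqrt (welch_bound CARD('m) (vec.dim W)))"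
proof -
  have "0 \<le> welch_bound CARD('m) (vec.dim W)"
    using card_ge_2 dim_le_card by (intro welch_bound_nonneg) auto
  then have "(cmod z)\<^sup>2 = welch_bound CARD('m) (vec.dim W)
      \<longleftrightarrow> cmod z = sqrt (welch_bound CARD('m) (vec.dim W))" for z
    by (metis norm_ge_zero real_sqrt_unique real_sqrt_pow2)
  then show ?thesis
    using offdiag_max_sq_eq_welch_bound_iff[OF card_ge_2 _ dim_le_frob_sq_cross_gram] cross_gram_diag
      frob_sq_cross_gram_eq_dim_iff
    by simp
qed

lemma welch_bound_attained_iff_equimodular:
  "offdiag_max_sq (cross_gram w v) = welch_bound CARD('m) (vec.dim W) \<longleftrightarrow>
    cross_gram w v = cross_gram w (canonical_dual w) \<and>
    (\<exists>c. \<forall>i j. i \<noteq> j \<longrightarrow> cmod (cross_gram w v $ i $ j) = c)"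
proof
  assume "offdiag_max_sq (cross_gram w v) = welch_bound CARD('m) (vec.dim W)"
  from this[unfolded welch_bound_attained_iff]
  show "cross_gram w v = cross_gram w (canonical_dual w) \<and>
      (\<exists>c. \<forall>i j. i \<noteq> j \<longrightarrow> cmod (cross_gram w v $ i $ j) = c)" by blast
next
  assume "cross_gram w v = cross_gram w (canonical_dual w) \<and>
      (\<exists>c. \<forall>i j. i \<noteq> j \<longrightarrow> cmod (cross_gram w v $ i $ j) = c)"
  then obtain c where "frob_sq (cross_gram w v) = vec.dim W"
    and "\<forall>i j. i \<noteq> j \<longrightarrow> cmod (cross_gram w v $ i $ j) = c"
    using frob_sq_cross_gram_eq_dim_iff by blast
  then show "offdiag_max_sq (cross_gram w v) = welch_bound CARD('m) (vec.dim W)"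
    using offdiag_max_sq_eq_welch_bound_if_equimodular[OF card_ge_2] cross_gram_diag by blast
qed

lemma welch_bound_attained_iff_canonical:
  "offdiag_max_sq (cross_gram w v) = welch_bound CARD('m) (vec.dim W) \<longleftrightarrow>
    (\<exists>c. \<forall>i j. i \<noteq> j \<longrightarrow> cmod (cinner (w i) (v j)) = c) \<and>
    (\<forall>j. v j = obl_proj V (orth_compl W) (canonical_dual w j))"
  using welch_bound_attained_iff_equimodular cross_gram_eq_canonical_iff
  by (auto simp: cross_gram_def)

lemma welch_bound_attained_iff_signature:
  "offdiag_max_sq (cross_gram w v) = welch_bound CARD('m) (vec.dim W) \<longleftrightarrow>
    (\<exists>Q. gen_signature Q \<and> cross_gram w v = (real (vec.dim W) / real CARD('m)) *\<^sub>R
      (mat 1 + sqrt ((real CARD('m) - real (vec.dim W)) / (real (vec.dim W) * (real CARD('m) - 1))) *\<^sub>R Q))"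
proof -
  have "sqrt (welch_bound CARD('m) (vec.dim W)) = real (vec.dim W) / real CARD('m) *
      sqrt ((real CARD('m) - real (vec.dim W)) / (real (vec.dim W) * (real CARD('m) - 1)))"
    using dim_pos dim_le_card card_ge_2 by (intro sqrt_welch_bound) auto
  moreover have "0 \<le> sqrt ((real CARD('m) - real (vec.dim W)) / (real (vec.dim W) * (real CARD('m) - 1)))"
    using dim_le_card card_ge_2 by simp
  ultimately show ?thesis
    using welch_bound_attained_iff hermitian_cross_gram_iff cross_gram_diag
    by (simp add: gen_signature_decomposition_iff)
qed

lemma welch_bound_attained_iff_ETF:
  "offdiag_max_sq (cross_gram w v) = welch_bound CARD('m) (vec.dim W) \<longleftrightarrow>
    is_ETF CARD('m) (vec.dim W) W
      (\<lambda>i. complex_of_real (sqrt (real CARD('m) / real (vec.dim W)))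
        *s (psd_sqrt (mp_inverse (frame_operator w)) *v w i)) \<and>
    (\<forall>j. v j = obl_proj V (orth_compl W) (canonical_dual w j))"
proof -
  let ?k = "complex_of_real (sqrt (real CARD('m) / real (vec.dim W)))"
  have "?k \<noteq> 0" and k: "\<forall>i. complex_of_real ((cmod ?k)\<^sup>2) * cross_gram w v $ i $ i = 1"
    using dim_pos card_ge_2 by (simp_all add: cross_gram_diag del: vec.dim_eq_0)
  have "is_ETF CARD('m) (vec.dim W) W (\<lambda>i. ?k *s (psd_sqrt (mp_inverse (frame_operator w)) *v w i))
      \<longleftrightarrow> (\<forall>i. complex_of_real ((cmod ?k)\<^sup>2) * cross_gram w (canonical_dual w) $ i $ i = 1)
        \<and> (\<exists>c. \<forall>i j. i \<noteq> j \<longrightarrow> cmod (cross_gram w (canonical_dual w) $ i $ j) = c)"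
    using is_ETF_scaled_psd_sqrt_pinv_frame_iff[OF \<open>?k \<noteq> 0\<close>, of "CARD('m)" "vec.dim W" w]
    by (simp only: span_frame simp_thms)
  then show ?thesis
    unfolding welch_bound_attained_iff_equimodular cross_gram_eq_canonical_iff[symmetric]
    using k by auto
qed

end

theorem theorem3p5:
  fixes W V :: "(complex^'n) set"
    and w v :: "'m::finite \<Rightarrow> complex^'n"
  assumes subW: "vec.subspace W" and subV: "vec.subspace V"
    and dsum: "direct_sum_whole W (orth_compl V)"
    and frame: "is_frame W w"
    and dual: "oblique_dual_frame W V w v"
    and diag: "\<forall>i j. cinner (w i) (v i) = cinner (w j) (v j)"
    and N2: "CARD('m) \<ge> 2"
    and Wnz: "W \<noteq> {0}"
  defines "N \<equiv> CARD('m)"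
    and "dW \<equiv> vec.dim W"
    and "S \<equiv> frame_operator w"
    and "mu \<equiv> Max {(cmod (cinner (w i) (v j)))\<^sup>2 | i j. i \<noteq> j}"
    and "G \<equiv> (\<chi> i j. cinner (w i) (v j)) :: complex^'m^'m"
  shows "mu \<ge> (real dW * (real N - real dW) / ((real N)\<^sup>2 * (real N - 1)))
    \<and> (mu = (real dW * (real N - real dW) / ((real N)\<^sup>2 * (real N - 1))) \<longleftrightarrow>
         (\<exists>c. \<forall>i j. i \<noteq> j \<longrightarrow> cmod (cinner (w i) (v j)) = c)
         \<and> (\<forall>j. v j = obl_proj V (orth_compl W) (mp_inverse S *v w j)))
    \<and> (mu = (real dW * (real N - real dW) / ((real N)\<^sup>2 * (real N - 1))) \<longleftrightarrow>
         (\<exists>Q. gen_signature Q \<and>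
            G = (real dW / real N) *\<^sub>R (mat 1 + sqrt ((real N - real dW) / (real dW * (real N - 1))) *\<^sub>R Q)))
    \<and> (mu = (real dW * (real N - real dW) / ((real N)\<^sup>2 * (real N - 1))) \<longleftrightarrow>
         is_ETF N dW W (\<lambda>i. complex_of_real (sqrt (real N / real dW)) *s (psd_sqrt (mp_inverse S) *v w i))
         \<and> (\<forall>j. v j = obl_proj V (orth_compl W) (mp_inverse S *v w j)))"
proof -
  interpret equal_diagonal_oblique_dual W V w v
    using dsum frame dual diag N2 Wnz by unfold_locales
  have "mu = offdiag_max_sq (cross_gram w v)"
    by (simp add: mu_def offdiag_max_sq_def cross_gram_def)
  moreover have "G = cross_gram w v" by (simp add: G_def cross_gram_def)
  moreover have "mp_inverse S *v w j = canonical_dual w j" for j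
    by (simp add: S_def canonical_dual_def)
  moreover have "real dW * (real N - real dW) / ((real N)\<^sup>2 * (real N - 1)) = welch_bound N dW"
    by (simp add: welch_bound_def)
  ultimately show ?thesis
    using welch_bound_le_offdiag_max_sq_cross_gram welch_bound_attained_iff_canonical
      welch_bound_attained_iff_signature welch_bound_attained_iff_ETF
    by (simp add: N_def dW_def S_def)
qed

end
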